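(* Let $f:2^V\to\mathbb{Z}_{\ge0}$ be a connectivity function, $W\subseteq V$, and $(C_1,C_2,C_3)$ a minimum $W$-improvement of arity 3. Then for every $i,j\in\{1,2,3\}$ and every set $P$ with $C_i\subseteq P\subseteq C_i\cup(W\cap C_j)$, it holds that $f(P)\ge f(C_i)$.
   Context: A connectivity function $f:2^V\to\mathbb{Z}_{\ge0}$ ($V$ finite) satisfies $f(\emptyset)=0$, $f(X)=f(V\setminus X)$, and $f(X\cup Y)+f(X\cap Y)\le f(X)+f(Y)$. For $W\subseteq V$, a $W$-improvement is a tripartition $(C_1,C_2,C_3)$ of $V$ (pairwise disjoint, possibly empty, union $V$) with $f(C_i)<f(W)/2$, $f(C_i\cap W)<f(W)$, $f(C_i\cap(V\setminus W))<f(W)$ for each $i$. Its width is $\max_i f(C_i)$, its sum-width is $\sum_i f(C_i)$, and its arity is the number of nonempty $C_i$. A $W$-improvement is minimum if it has minimum width among all $W$-improvements, subject to that minimum arity, and subject to those minimum sum-width. *)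

theory Defs
  imports Main
begin

text \<open>Connectivity function on a finite ground set V, with values in the naturals.
  Set functions are only meaningful on subsets of V.\<close>
definition connectivity_function :: "'a set \<Rightarrow> ('a set \<Rightarrow> nat) \<Rightarrow> bool" where
  "connectivity_function V f \<longleftrightarrow>
     finite V \<and> f {} = 0 \<and>
     (\<forall>X\<subseteq>V. f X = f (V - X)) \<and>
     (\<forall>X\<subseteq>V. \<forall>Y\<subseteq>V. f (X \<union> Y) + f (X \<inter> Y) \<le> f X + f Y)"

definition tripartition :: "'a set \<Rightarrow> (nat \<Rightarrow> 'a set) \<Rightarrow> bool" where
  "tripartition V C \<longleftrightarrow>
     C 1 \<union> C 2 \<union> C 3 = V \<and>
     C 1 \<inter> C 2 = {} \<and> C 1 \<inter> C 3 = {} \<and> C 2 \<inter> C 3 = {}"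

text \<open>f(C_i) < f(W)/2 is written as 2 * f(C_i) < f(W) (exact over the naturals).\<close>
definition W_improvement ::
  "'a set \<Rightarrow> ('a set \<Rightarrow> nat) \<Rightarrow> 'a set \<Rightarrow> (nat \<Rightarrow> 'a set) \<Rightarrow> bool" where
  "W_improvement V f W C \<longleftrightarrow>
     tripartition V C \<and>
     (\<forall>i\<in>{1,2,3::nat}.
        2 * f (C i) < f W \<and>
        f (C i \<inter> W) < f W \<and>
        f (C i \<inter> (V - W)) < f W)"

definition width :: "('a set \<Rightarrow> nat) \<Rightarrow> (nat \<Rightarrow> 'a set) \<Rightarrow> nat" where
  "width f C = Max {f (C 1), f (C 2), f (C 3)}"

definition sum_width :: "('a set \<Rightarrow> nat) \<Rightarrow> (nat \<Rightarrow> 'a set) \<Rightarrow> nat" where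
  "sum_width f C = f (C 1) + f (C 2) + f (C 3)"

definition arity :: "(nat \<Rightarrow> 'a set) \<Rightarrow> nat" where
  "arity C = card {i\<in>{1,2,3::nat}. C i \<noteq> {}}"

definition min_W_improvement ::
  "'a set \<Rightarrow> ('a set \<Rightarrow> nat) \<Rightarrow> 'a set \<Rightarrow> (nat \<Rightarrow> 'a set) \<Rightarrow> bool" where
  "min_W_improvement V f W C \<longleftrightarrow>
     W_improvement V f W C \<and>
     (\<forall>D. W_improvement V f W D \<longrightarrow>
        width f C < width f D \<or>
        (width f C = width f D \<and> arity C < arity D) \<or>
        (width f C = width f D \<and> arity C = arity D \<and> sum_width f C \<le> sum_width f D))"

end

theory Submission
  imports Defs
begin

text \<open>Write \<open>X = C i\<close>, \<open>Y = C j\<close> and suppose \<open>f P < f X\<close>. Moving \<open>A = P - X \<subseteq> Y \<inter> W\<close>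
  from \<open>Y\<close> to \<open>X\<close> gives parts \<open>P\<close> and \<open>Y - A\<close>, and posimodularity
  \<open>f (Y - P) + f (P - Y) \<le> f Y + f P\<close> makes both strictly cheaper than \<open>X\<close> and \<open>Y\<close>. Outside \<open>W\<close>
  nothing changed, so this is a \<open>W\<close>-improvement of smaller sum-width, contradicting minimality,
  unless some new part \<open>Q\<close> (replacing the old part \<open>X'\<close>) has \<open>f (Q \<inter> W) \<ge> f W\<close>. Then
  submodularity gives \<open>f (X' \<union> W) = f (Q \<union> W) \<le> f Q \<le> f X'\<close>, and from this \<open>(V - X', X', {})\<close>
  is a \<open>W\<close>-improvement of no larger width and arity 2, again contradicting minimality.\<close>

lemma connectivity_function_empty: "connectivity_function V f \<Longrightarrow> f {} = 0"
  unfolding connectivity_function_def by blast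

lemma connectivity_function_complement:
  "connectivity_function V f \<Longrightarrow> X \<subseteq> V \<Longrightarrow> f (V - X) = f X"
  unfolding connectivity_function_def by metis

lemma connectivity_function_submodular:
  "connectivity_function V f \<Longrightarrow> X \<subseteq> V \<Longrightarrow> Y \<subseteq> V \<Longrightarrow>
    f (X \<union> Y) + f (X \<inter> Y) \<le> f X + f Y"
  unfolding connectivity_function_def by blast

lemma connectivity_function_posimodular:
  assumes cf: "connectivity_function V f" and "X \<subseteq> V" "Y \<subseteq> V"
  shows "f (X - Y) + f (Y - X) \<le> f X + f Y"
proof -
  have "f (X \<union> (V - Y)) + f (X \<inter> (V - Y)) \<le> f X + f (V - Y)"
    using connectivity_function_submodular[OF cf \<open>X \<subseteq> V\<close>] by blast
  moreover have "X \<union> (V - Y) = V - (Y - X)" and "X \<inter> (V - Y) = X - Y"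
    using assms by blast+
  moreover have "f (V - (Y - X)) = f (Y - X)" "f (V - Y) = f Y"
    using connectivity_function_complement[OF cf] assms by (auto simp: subset_iff)
  ultimately show ?thesis by simp
qed

definition improvement_part :: "'a set \<Rightarrow> ('a set \<Rightarrow> nat) \<Rightarrow> 'a set \<Rightarrow> 'a set \<Rightarrow> bool" where
  "improvement_part V f W X \<longleftrightarrow>
     2 * f X < f W \<and> f (X \<inter> W) < f W \<and> f (X \<inter> (V - W)) < f W"

lemma W_improvement_iff:
  "W_improvement V f W C \<longleftrightarrow>
     tripartition V C \<and> (\<forall>l\<in>{1,2,3}. improvement_part V f W (C l))"
  unfolding W_improvement_def improvement_part_def by blast

lemma tripartition_subset: "tripartition V C \<Longrightarrow> l \<in> {1,2,3} \<Longrightarrow> C l \<subseteq> V"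
  unfolding tripartition_def by blast

lemma tripartition_disjoint:
  "tripartition V C \<Longrightarrow> l \<in> {1,2,3} \<Longrightarrow> m \<in> {1,2,3} \<Longrightarrow> l \<noteq> m \<Longrightarrow> C l \<inter> C m = {}"
  unfolding tripartition_def by auto

lemma tripartition_move:
  assumes "tripartition V C" "i \<in> {1,2,3}" "j \<in> {1,2,3}" "i \<noteq> j" "A \<subseteq> C j"
  shows "tripartition V (C(i := C i \<union> A, j := C j - A))"
proof -
  have "(i, j) \<in> {(1, 2), (1, 3), (2, 1), (2, 3), (3, 1), (3, 2)}"
    using assms(2-4) by auto
  then show ?thesis
    using assms(1,5) unfolding tripartition_def by (elim insertE emptyE; simp; auto)
qed

lemma width_mono:
  assumes "\<And>l. l \<in> {1,2,3} \<Longrightarrow> f (D l) \<le> f (C l)"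
  shows "width f D \<le> width f C"
proof -
  have "f (D 1) \<le> f (C 1)" "f (D 2) \<le> f (C 2)" "f (D 3) \<le> f (C 3)"
    using assms by auto
  then have "max (f (D 1)) (max (f (D 2)) (f (D 3))) \<le> max (f (C 1)) (max (f (C 2)) (f (C 3)))"
    by (intro max.mono)
  then show ?thesis
    by (simp add: width_def)
qed

lemma sum_width_strict_mono:
  assumes "\<And>l. l \<in> {1,2,3} \<Longrightarrow> f (D l) \<le> f (C l)"
    and "\<exists>l\<in>{1,2,3}. f (D l) < f (C l)"
  shows "sum_width f D < sum_width f C"
proof -
  have "f (D 1) \<le> f (C 1)" "f (D 2) \<le> f (C 2)" "f (D 3) \<le> f (C 3)"
    and "f (D 1) < f (C 1) \<or> f (D 2) < f (C 2) \<or> f (D 3) < f (C 3)"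
    using assms by auto
  then show ?thesis
    unfolding sum_width_def by linarith
qed

lemma part_le_width: "l \<in> {1,2,3} \<Longrightarrow> f (C l) \<le> width f C"
  unfolding width_def by auto

lemma arity_le_3: "arity C \<le> 3"
proof -
  have "arity C \<le> card {1,2,3::nat}"
    unfolding arity_def by (rule card_mono) auto
  then show ?thesis by simp
qed

lemma arity_bipartition_le_2: "arity ((\<lambda>_. {})(1 := X, 2 := Y)) \<le> 2"
proof -
  have "arity ((\<lambda>_. {})(1 := X, 2 := Y)) \<le> card {1,2::nat}"
    unfolding arity_def by (rule card_mono) auto
  then show ?thesis by simp
qed

lemma min_W_improvement_arity_le:
  "min_W_improvement V f W C \<Longrightarrow> W_improvement V f W D \<Longrightarrow> width f D \<le> width f C \<Longrightarrow>
    arity C \<le> arity D"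
  unfolding min_W_improvement_def by force

lemma min_W_improvement_sum_width_le:
  "min_W_improvement V f W C \<Longrightarrow> W_improvement V f W D \<Longrightarrow> width f D \<le> width f C \<Longrightarrow>
    arity D \<le> arity C \<Longrightarrow> sum_width f C \<le> sum_width f D"
  unfolding min_W_improvement_def by force

lemma W_improvement_bipartition:
  assumes cf: "connectivity_function V f" and WV: "W \<subseteq> V"
    and XV: "X \<subseteq> V" and X: "improvement_part V f W X"
    and QV: "Q \<subseteq> V" and outside: "Q - W = X - W" and le: "f Q \<le> f X"
    and inside: "f W \<le> f (Q \<inter> W)"
  shows "W_improvement V f W ((\<lambda>_. {})(1 := V - X, 2 := X))"
proof -
  have fX: "2 * f X < f W"
    using X unfolding improvement_part_def by blast
  have "f (Q \<union> W) + f (Q \<inter> W) \<le> f Q + f W"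
    using connectivity_function_submodular[OF cf QV WV] .
  then have "f (Q \<union> W) \<le> f X"
    using inside le by linarith
  moreover have "Q \<union> W = X \<union> W"
    using outside by blast
  ultimately have outer: "f (V - (X \<union> W)) \<le> f X"
    using connectivity_function_complement[OF cf, of "X \<union> W"] XV WV by simp
  have "f (X \<union> (V - (X \<union> W))) + f (X \<inter> (V - (X \<union> W))) \<le> f X + f (V - (X \<union> W))"
    by (rule connectivity_function_submodular[OF cf XV]) blast
  moreover have "X \<union> (V - (X \<union> W)) = V - (W - X)" and "X \<inter> (V - (X \<union> W)) = {}"
    using XV by blast+
  ultimately have "f (W - X) \<le> 2 * f X"
    using outer connectivity_function_complement[OF cf, of "W - X"] WV
      connectivity_function_empty[OF cf] by force
  moreover have "(V - X) \<inter> W = W - X" and "(V - X) \<inter> (V - W) = V - (X \<union> W)"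
    using WV by blast+
  ultimately have "improvement_part V f W (V - X)"
    using outer fX connectivity_function_complement[OF cf XV]
    unfolding improvement_part_def by simp
  moreover have "improvement_part V f W {}"
    using fX connectivity_function_empty[OF cf] unfolding improvement_part_def by simp
  moreover have "tripartition V ((\<lambda>_. {})(1 := V - X, 2 := X))"
    using XV unfolding tripartition_def by auto
  ultimately show ?thesis
    using X unfolding W_improvement_iff by auto
qed

lemma min_W_improvement_Int_W_less:
  assumes cf: "connectivity_function V f" and WV: "W \<subseteq> V"
    and min: "min_W_improvement V f W C" and arity: "arity C = 3"
    and l: "l \<in> {1,2,3}" and QV: "Q \<subseteq> V"
    and outside: "Q - W = C l - W" and le: "f Q \<le> f (C l)"
  shows "f (Q \<inter> W) < f W"
proof (rule ccontr)
  assume "\<not> f (Q \<inter> W) < f W"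
  then have inside: "f W \<le> f (Q \<inter> W)" by simp
  define D where "D = (\<lambda>_::nat. {})(1 := V - C l, 2 := C l)"
  have "W_improvement V f W C"
    using min unfolding min_W_improvement_def by blast
  then have "C l \<subseteq> V" and "improvement_part V f W (C l)"
    using l tripartition_subset unfolding W_improvement_iff by blast+
  then have improvement: "W_improvement V f W D"
    unfolding D_def using W_improvement_bipartition[OF cf WV _ _ QV outside le inside] by blast
  have "width f D = f (C l)"
    using connectivity_function_complement[OF cf \<open>C l \<subseteq> V\<close>] connectivity_function_empty[OF cf]
    unfolding D_def width_def by simp
  then have "width f D \<le> width f C"
    using part_le_width[OF l] by simp
  then have "arity C \<le> arity D"
    using min_W_improvement_arity_le[OF min improvement] by blast
  then show False
    using arity arity_bipartition_le_2[of "V - C l" "C l"] unfolding D_def by simp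
qed

lemma min_W_improvement_move_not_both_smaller:
  assumes min: "min_W_improvement V f W C" and arity: "arity C = 3"
    and ij: "i \<in> {1,2,3}" "j \<in> {1,2,3}" "i \<noteq> j" and A: "A \<subseteq> C j \<inter> W"
    and i_inside: "f ((C i \<union> A) \<inter> W) < f W" and j_inside: "f ((C j - A) \<inter> W) < f W"
  shows "f (C i) \<le> f (C i \<union> A) \<or> f (C j) \<le> f (C j - A)"
proof (rule ccontr)
  assume "\<not> ?thesis"
  then have i_less: "f (C i \<union> A) < f (C i)" and j_less: "f (C j - A) < f (C j)" by simp_all
  define D where "D = C(i := C i \<union> A, j := C j - A)"
  have C: "W_improvement V f W C"
    using min unfolding min_W_improvement_def by blast
  have "(C i \<union> A) \<inter> (V - W) = C i \<inter> (V - W)" and "(C j - A) \<inter> (V - W) = C j \<inter> (V - W)"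
    using A by blast+
  then have "improvement_part V f W (C i \<union> A)" and "improvement_part V f W (C j - A)"
    using C ij i_less j_less i_inside j_inside
    unfolding W_improvement_iff improvement_part_def by auto
  moreover have "tripartition V D"
    using C tripartition_move[OF _ ij] A unfolding D_def W_improvement_iff by blast
  ultimately have improvement: "W_improvement V f W D"
    using C unfolding W_improvement_iff D_def by auto
  have le: "f (D l) \<le> f (C l)" if "l \<in> {1,2,3}" for l
    using i_less j_less unfolding D_def by auto
  have "sum_width f D < sum_width f C"
    by (rule sum_width_strict_mono[OF le]) (use ij i_less in \<open>auto simp: D_def\<close>)
  moreover have "sum_width f C \<le> sum_width f D"
    using min_W_improvement_sum_width_le[OF min improvement width_mono[OF le]]
      arity arity_le_3[of D] by simp
  ultimately show False by simp
qed

theorem lemma9: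
  fixes V W :: "'a set" and f :: "'a set \<Rightarrow> nat" and C :: "nat \<Rightarrow> 'a set"
  assumes "connectivity_function V f"
    and "W \<subseteq> V"
    and "min_W_improvement V f W C"
    and "arity C = 3"
    and "i \<in> {1,2,3}" and "j \<in> {1,2,3}"
    and "C i \<subseteq> P" and "P \<subseteq> C i \<union> (W \<inter> C j)"
  shows "f P \<ge> f (C i)"
proof (cases "i = j")
  case True
  then show ?thesis
    using assms(7,8) by (simp add: subset_antisym)
next
  case False
  note cf = assms(1) and WV = assms(2) and min = assms(3) and arity = assms(4)
  define A where "A = P - C i"
  have C: "tripartition V C"
    using min unfolding min_W_improvement_def W_improvement_iff by blast
  have CV: "C i \<subseteq> V" "C j \<subseteq> V"
    using C assms(5,6) tripartition_subset by blast+
  have A: "A \<subseteq> C j \<inter> W" and P: "P = C i \<union> A" and PV: "P \<subseteq> V"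
    using assms(7,8) CV unfolding A_def by blast+
  have "C j - P = C j - A" and "P - C j = C i"
    using P A tripartition_disjoint[OF C assms(5,6) False] by blast+
  then have posimodular: "f (C j - A) + f (C i) \<le> f (C j) + f P"
    using connectivity_function_posimodular[OF cf CV(2) PV] by simp
  show ?thesis
  proof (rule ccontr)
    assume "\<not> ?thesis"
    then have "f P < f (C i)" and "f (C j - A) < f (C j)"
      using posimodular by simp_all
    moreover have "f (P \<inter> W) < f W"
      by (rule min_W_improvement_Int_W_less[OF cf WV min arity assms(5) PV])
        (use P A \<open>f P < f (C i)\<close> in auto)
    moreover have "f ((C j - A) \<inter> W) < f W"
      by (rule min_W_improvement_Int_W_less[OF cf WV min arity assms(6)])
        (use CV A \<open>f (C j - A) < f (C j)\<close> in auto)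
    ultimately show False
      using min_W_improvement_move_not_both_smaller[OF min arity assms(5,6) False A] P by auto
  qed
qed

end
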